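(* Let $X$ be a Banach space, $K\subseteq X^{*}$ a weak*-compact convex set, $B\subseteq K$ a set that (I)-generates $K$, and $A=(a_{nk})_{n,k\in\mathbb{N}}$ a positive regular matrix. Then for each $p\geq 1$ and every bounded sequence $(x_k)_{k\in\mathbb{N}}$ in $X$, \[\sup_{x^{*}\in K}\limsup_{n\to\infty}\sum_{k=1}^{\infty}a_{nk}|x^{*}(x_k)|^{p}=\sup_{x^{*}\in B}\limsup_{n\to\infty}\sum_{k=1}^{\infty}a_{nk}|x^{*}(x_k)|^{p}.\]
   Context: A complex matrix $A=(a_{nk})$ is regular if $\sup_n\sum_k|a_{nk}|<\infty$, $\lim_n\sum_k a_{nk}=1$ and $\lim_n a_{nk}=0$ for every $k$ (equivalently, it maps convergent sequences to sequences converging to the same limit via $(s_k)\mapsto(\sum_k a_{nk}s_k)_n$); positive means $a_{nk}\ge 0$. For a weak*-compact convex $K\subseteq X^{*}$, a subset $B\subseteq K$ (I)-generates $K$ if whenever $B=\bigcup_{n=1}^\infty B_n$, $K$ equals the norm-closure of the convex hull of $\bigcup_n\overline{\mathrm{co}}^{w^*}(B_n)$ (weak*-closed convex hulls). *)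

theory Defs
  imports "HOL-Analysis.Analysis"
begin

text \<open>The dual space X* of a (real) Banach space 'a is modelled as bounded linear functionals (blinfun).
  The weak* topology is the coarsest topology making all evaluations f \<mapsto> f x continuous,
  i.e. the pullback of the product (pointwise) topology on 'a \<Rightarrow> real.\<close>
definition weak_star_topology :: "('a::real_normed_vector \<Rightarrow>\<^sub>L real) topology" where
  "weak_star_topology = pullback_topology UNIV blinfun_apply (powertop_real UNIV)"

definition weak_star_closed_convex_hull ::
  "('a::real_normed_vector \<Rightarrow>\<^sub>L real) set \<Rightarrow> ('a \<Rightarrow>\<^sub>L real) set" where
  "weak_star_closed_convex_hull S =
     \<Inter>{C. closedin weak_star_topology C \<and> convex C \<and> S \<subseteq> C}"

definition I_generates ::
  "('a::real_normed_vector \<Rightarrow>\<^sub>L real) set \<Rightarrow> ('a \<Rightarrow>\<^sub>L real) set \<Rightarrow> bool" where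
  "I_generates B K \<longleftrightarrow> B \<subseteq> K \<and>
     (\<forall>Bs :: nat \<Rightarrow> ('a \<Rightarrow>\<^sub>L real) set. B = (\<Union>n. Bs n) \<longrightarrow>
        K = closure (convex hull (\<Union>n. weak_star_closed_convex_hull (Bs n))))"

definition regular_matrix :: "(nat \<Rightarrow> nat \<Rightarrow> real) \<Rightarrow> bool" where
  "regular_matrix a \<longleftrightarrow>
     (\<forall>n. summable (\<lambda>k. \<bar>a n k\<bar>)) \<and>
     bdd_above (range (\<lambda>n. \<Sum>k. \<bar>a n k\<bar>)) \<and>
     (\<lambda>n. \<Sum>k. a n k) \<longlonglongrightarrow> 1 \<and>
     (\<forall>k. (\<lambda>n. a n k) \<longlonglongrightarrow> 0)"

definition positive_matrix :: "(nat \<Rightarrow> nat \<Rightarrow> real) \<Rightarrow> bool" where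
  "positive_matrix a \<longleftrightarrow> (\<forall>n k. a n k \<ge> 0)"

end

theory Submission imports Defs begin

text \<open>Let \<open>z\<close> bound the right-hand side and \<open>e > 0\<close>. The functionals whose \<open>p\<close>-power row sums stay
  below \<open>z + e/2\<close> from the \<open>m\<close>-th row on form sets \<open>C\<^sub>m\<close>, increasing in \<open>m\<close>, that are convex
  (\<open>|\<cdot>|\<^sup>p\<close> is convex) and weak*-closed (each row sum is a supremum of weak*-continuous partial
  sums), and every element of \<open>B\<close> lies in some \<open>C\<^sub>m\<close>. Applying (I)-generation to the cover
  \<open>B = \<Union>\<^sub>m (B \<inter> C\<^sub>m)\<close> puts \<open>K\<close> into the norm closure of \<open>\<Union>\<^sub>m C\<^sub>m\<close>. Since the row sums are
  uniformly norm-continuous in the functional (the \<open>x\<^sub>k\<close> are bounded and the rows of \<open>A\<close> have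
  bounded sums), every \<open>f \<in> K\<close> eventually has row sums below \<open>z + e\<close>.\<close>

lemma powr_le_self_of_le_1:
  fixes w p :: real
  assumes "0 \<le> w" "w \<le> 1" "1 \<le> p"
  shows "w powr p \<le> w"
  using powr_mono'[of 1 p w] assms by simp

lemma convex_on_powr_nonneg:
  fixes p :: real
  assumes "1 \<le> p"
  shows "convex_on {0..} (\<lambda>r. r powr p)"
proof (rule convex_onI)
  fix t r s :: real
  assume t: "0 < t" "t < 1" and rs: "r \<in> {0..}" "s \<in> {0..}"
  have scaled: "(w * c) powr p \<le> w * c powr p" if "0 \<le> w" "w \<le> 1" "0 \<le> c" for w c :: real
    using that mult_right_mono[OF powr_le_self_of_le_1[OF that(1,2) assms], of "c powr p"]
    by (simp add: powr_mult)
  consider "r = 0" | "s = 0" | "0 < r" "0 < s" using rs by fastforce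
  then show "((1 - t) *\<^sub>R r + t *\<^sub>R s) powr p \<le> (1 - t) * r powr p + t * s powr p"
  proof cases
    case 1
    then show ?thesis using scaled[of t s] t rs by simp
  next
    case 2
    then show ?thesis using scaled[of "1 - t" r] t rs by simp
  next
    case 3
    then show ?thesis using t by (intro convex_onD[OF powr_convex[OF assms]]) auto
  qed
qed simp

lemma convex_on_abs_powr:
  fixes p :: real
  assumes "1 \<le> p"
  shows "convex_on UNIV (\<lambda>r. \<bar>r\<bar> powr p)"
proof (rule convex_onI)
  fix t r s :: real
  assume t: "0 < t" "t < 1"
  have "\<bar>(1 - t) * r + t * s\<bar> \<le> \<bar>(1 - t) * r\<bar> + \<bar>t * s\<bar>"
    by (rule abs_triangle_ineq)
  also have "\<dots> = (1 - t) * \<bar>r\<bar> + t * \<bar>s\<bar>"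
    using t by (simp add: abs_mult)
  finally have "\<bar>(1 - t) * r + t * s\<bar> powr p \<le> ((1 - t) * \<bar>r\<bar> + t * \<bar>s\<bar>) powr p"
    using assms by (intro powr_mono2) auto
  also have "\<dots> \<le> (1 - t) * \<bar>r\<bar> powr p + t * \<bar>s\<bar> powr p"
    using convex_onD[OF convex_on_powr_nonneg[OF assms], of t "\<bar>r\<bar>" "\<bar>s\<bar>"] t by simp
  finally show "\<bar>(1 - t) *\<^sub>R r + t *\<^sub>R s\<bar> powr p \<le> (1 - t) * \<bar>r\<bar> powr p + t * \<bar>s\<bar> powr p"
    by simp
qed simp

lemma convex_Union_incseq:
  fixes C :: "nat \<Rightarrow> 'a::real_vector set"
  assumes "incseq C" and "\<And>m. convex (C m)"
  shows "convex (\<Union>m. C m)"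
proof (rule convexI)
  fix g h and u v :: real
  assume "g \<in> (\<Union>m. C m)" "h \<in> (\<Union>m. C m)" and uv: "0 \<le> u" "0 \<le> v" "u + v = 1"
  then obtain m m' where "g \<in> C m" "h \<in> C m'" by blast
  then have "g \<in> C (max m m')" "h \<in> C (max m m')"
    using \<open>incseq C\<close> by (auto dest: incseqD[of C, OF _ max.cobounded1] incseqD[of C, OF _ max.cobounded2])
  then have "u *\<^sub>R g + v *\<^sub>R h \<in> C (max m m')"
    using assms(2) uv by (simp add: convex_def)
  then show "u *\<^sub>R g + v *\<^sub>R h \<in> (\<Union>m. C m)" by blast
qed

lemma convex_sublevel_set:
  assumes "convex_on S f"
  shows "convex {y \<in> S. f y \<le> t}"
proof (rule convexI)
  fix y z and u v :: real
  assume yz: "y \<in> {y \<in> S. f y \<le> t}" "z \<in> {y \<in> S. f y \<le> t}" and uv: "0 \<le> u" "0 \<le> v" "u + v = 1"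
  then have "u *\<^sub>R y + v *\<^sub>R z \<in> S"
    using convex_on_imp_convex[OF assms] by (simp add: convex_def)
  moreover have "f (u *\<^sub>R y + v *\<^sub>R z) \<le> u * f y + v * f z"
    using assms yz uv unfolding convex_on_def by blast
  moreover have "u * f y + v * f z \<le> u * t + v * t"
    using yz uv by (intro add_mono mult_left_mono) auto
  ultimately show "u *\<^sub>R y + v *\<^sub>R z \<in> {y \<in> S. f y \<le> t}"
    using uv by (simp add: distrib_right[symmetric])
qed

lemma topspace_weak_star_topology [simp]: "topspace weak_star_topology = UNIV"
  by (simp add: weak_star_topology_def topspace_pullback_topology)

lemma continuous_map_weak_star_apply:
  "continuous_map weak_star_topology euclideanreal (\<lambda>g. blinfun_apply g y)"
  unfolding weak_star_topology_def
  using continuous_map_pullback[OF continuous_map_product_projection[of y UNIV "\<lambda>_. euclideanreal"]]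
  by (simp add: o_def)

lemma weak_star_closed_convex_hull_subset:
  assumes "S \<subseteq> C" and "closedin weak_star_topology C" and "convex C"
  shows "weak_star_closed_convex_hull S \<subseteq> C"
  unfolding weak_star_closed_convex_hull_def using assms by blast

lemma I_generates_subset_closure_Union:
  fixes C :: "nat \<Rightarrow> ('a::real_normed_vector \<Rightarrow>\<^sub>L real) set"
  assumes "I_generates B K" and "B \<subseteq> (\<Union>m. C m)" and "incseq C"
    and "\<And>m. closedin weak_star_topology (C m)" and "\<And>m. convex (C m)"
  shows "K \<subseteq> closure (\<Union>m. C m)"
proof -
  have "B = (\<Union>m. B \<inter> C m)" using assms(2) by blast
  then have "K = closure (convex hull (\<Union>m. weak_star_closed_convex_hull (B \<inter> C m)))"
    using assms(1) unfolding I_generates_def by blast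
  moreover have "convex hull (\<Union>m. weak_star_closed_convex_hull (B \<inter> C m)) \<subseteq> (\<Union>m. C m)"
    using weak_star_closed_convex_hull_subset[of "B \<inter> C _" "C _"] assms(4,5)
    by (intro hull_minimal convex_Union_incseq[OF assms(3,5)]) blast
  ultimately show ?thesis by (simp add: closure_mono)
qed

lemma continuous_map_weak_star_abs_powr_apply:
  assumes "0 < p"
  shows "continuous_map weak_star_topology euclideanreal (\<lambda>g. \<bar>blinfun_apply g y\<bar> powr p)"
proof -
  have "continuous_map euclideanreal euclideanreal (\<lambda>r::real. \<bar>r\<bar> powr p)"
    using assms by (simp, intro continuous_on_powr') (auto intro!: continuous_intros)
  from continuous_map_compose[OF continuous_map_weak_star_apply this] show ?thesis
    by (simp add: o_def)
qed

lemma abs_blinfun_apply_le: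
  assumes "norm y \<le> M"
  shows "\<bar>blinfun_apply g y\<bar> \<le> norm g * M"
  using norm_blinfun[of g y] mult_left_mono[OF assms norm_ge_zero[of g]] by simp

lemma abs_powr_apply_uniformly_close:
  fixes x :: "nat \<Rightarrow> 'a::real_normed_vector" and f :: "'a \<Rightarrow>\<^sub>L real"
  assumes "bounded (range x)" and "0 < p" and "0 < \<epsilon>"
  obtains \<delta> where "0 < \<delta>"
    and "\<And>g k. dist g f < \<delta> \<Longrightarrow>
           \<bar>blinfun_apply f (x k)\<bar> powr p \<le> \<bar>blinfun_apply g (x k)\<bar> powr p + \<epsilon>"
proof -
  obtain M where M: "0 < M" "\<And>k. norm (x k) \<le> M"
    using assms(1) by (meson bounded_pos rangeI)
  define R where "R = (norm f + 1) * M"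
  have "uniformly_continuous_on {0..R} (\<lambda>r. r powr p)"
    using assms(2) by (intro compact_uniformly_continuous continuous_on_powr') (auto intro!: continuous_intros)
  then obtain d where d: "0 < d"
    and close: "\<And>r r'. r \<in> {0..R} \<Longrightarrow> r' \<in> {0..R} \<Longrightarrow> dist r' r < d \<Longrightarrow> dist (r' powr p) (r powr p) < \<epsilon>"
    using assms(3) unfolding uniformly_continuous_on_def by metis
  show ?thesis
  proof
    show "0 < min 1 (d / M)" using d M by simp
    fix g k assume "dist g f < min 1 (d / M)"
    then have gf: "norm (g - f) < 1" "norm (g - f) * M < d"
      using M by (auto simp: dist_norm field_simps)
    have "norm g \<le> norm f + 1" using gf norm_triangle_ineq2[of g f] by simp
    then have norm_le_R: "norm h * M \<le> R" if "h \<in> {f, g}" for h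
      using that M by (auto simp: R_def intro!: mult_right_mono)
    have "\<bar>blinfun_apply h (x k)\<bar> \<in> {0..R}" if "h \<in> {f, g}" for h
      using order_trans[OF abs_blinfun_apply_le[OF M(2)] norm_le_R[OF that]] by simp
    moreover have "\<bar>\<bar>blinfun_apply f (x k)\<bar> - \<bar>blinfun_apply g (x k)\<bar>\<bar> < d"
    proof -
      have "\<bar>\<bar>blinfun_apply f (x k)\<bar> - \<bar>blinfun_apply g (x k)\<bar>\<bar> \<le> \<bar>blinfun_apply (g - f) (x k)\<bar>"
        by (simp add: blinfun.diff_left abs_minus_commute)
      also have "\<dots> \<le> norm (g - f) * M" by (rule abs_blinfun_apply_le[OF M(2)])
      finally show ?thesis using gf(2) by simp
    qed
    ultimately show "\<bar>blinfun_apply f (x k)\<bar> powr p \<le> \<bar>blinfun_apply g (x k)\<bar> powr p + \<epsilon>"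
      using close[of "\<bar>blinfun_apply g (x k)\<bar>" "\<bar>blinfun_apply f (x k)\<bar>"] by (simp add: dist_real_def)
  qed
qed

definition power_row_sum ::
  "(nat \<Rightarrow> nat \<Rightarrow> real) \<Rightarrow> (nat \<Rightarrow> 'a) \<Rightarrow> real \<Rightarrow> nat \<Rightarrow> ('a::real_normed_vector \<Rightarrow>\<^sub>L real) \<Rightarrow> real"
  where "power_row_sum a x p n g = (\<Sum>k. a n k * \<bar>blinfun_apply g (x k)\<bar> powr p)"

context
  fixes a :: "nat \<Rightarrow> nat \<Rightarrow> real" and x :: "nat \<Rightarrow> 'a::real_normed_vector"
  assumes nonneg: "\<And>n k. 0 \<le> a n k"
    and summable_row: "\<And>n. summable (a n)"
    and bounded_x: "bounded (range x)"
begin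

lemma summable_power_row:
  assumes "0 \<le> p"
  shows "summable (\<lambda>k. a n k * \<bar>blinfun_apply g (x k)\<bar> powr p)"
proof -
  obtain M where M: "\<And>k. norm (x k) \<le> M"
    using bounded_x by (meson bounded_iff rangeI)
  show ?thesis
  proof (rule summable_comparison_test')
    show "summable (\<lambda>k. a n k * (norm g * M) powr p)"
      using summable_row by (simp add: summable_mult2)
    fix k
    have "\<bar>blinfun_apply g (x k)\<bar> powr p \<le> (norm g * M) powr p"
      using abs_blinfun_apply_le[OF M] assms by (intro powr_mono2) auto
    then show "norm (a n k * \<bar>blinfun_apply g (x k)\<bar> powr p) \<le> a n k * (norm g * M) powr p"
      using nonneg[of n k] by (simp add: mult_left_mono)
  qed
qed

lemma convex_on_power_row_sum:
  assumes "1 \<le> p"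
  shows "convex_on UNIV (power_row_sum a x p n)"
proof (rule convex_onI)
  fix t :: real and g h assume t: "0 < t" "t < 1"
  have "power_row_sum a x p n ((1 - t) *\<^sub>R g + t *\<^sub>R h)
      \<le> (\<Sum>k. (1 - t) * (a n k * \<bar>blinfun_apply g (x k)\<bar> powr p) + t * (a n k * \<bar>blinfun_apply h (x k)\<bar> powr p))"
    unfolding power_row_sum_def
  proof (rule suminf_le)
    fix k
    have "\<bar>blinfun_apply ((1 - t) *\<^sub>R g + t *\<^sub>R h) (x k)\<bar> powr p
        \<le> (1 - t) * \<bar>blinfun_apply g (x k)\<bar> powr p + t * \<bar>blinfun_apply h (x k)\<bar> powr p"
      using convex_onD[OF convex_on_abs_powr[OF assms], of t "blinfun_apply g (x k)" "blinfun_apply h (x k)"] t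
      by (simp add: blinfun.add_left blinfun.scaleR_left)
    from mult_left_mono[OF this nonneg]
    show "a n k * \<bar>blinfun_apply ((1 - t) *\<^sub>R g + t *\<^sub>R h) (x k)\<bar> powr p
        \<le> (1 - t) * (a n k * \<bar>blinfun_apply g (x k)\<bar> powr p) + t * (a n k * \<bar>blinfun_apply h (x k)\<bar> powr p)"
      by (simp add: algebra_simps)
  qed (use assms in \<open>auto intro!: summable_add summable_mult summable_power_row\<close>)
  also have "\<dots> = (1 - t) * power_row_sum a x p n g + t * power_row_sum a x p n h"
    unfolding power_row_sum_def using assms
    by (simp add: suminf_add[symmetric] suminf_mult summable_mult summable_power_row)
  finally show "power_row_sum a x p n ((1 - t) *\<^sub>R g + t *\<^sub>R h)
      \<le> (1 - t) * power_row_sum a x p n g + t * power_row_sum a x p n h" .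
qed simp

lemma closedin_power_row_sum_le:
  assumes "0 < p"
  shows "closedin weak_star_topology {g. power_row_sum a x p n g \<le> t}"
proof -
  have "power_row_sum a x p n g \<le> t \<longleftrightarrow> (\<forall>N. (\<Sum>k<N. a n k * \<bar>blinfun_apply g (x k)\<bar> powr p) \<le> t)"
    for g
  proof
    assume "power_row_sum a x p n g \<le> t"
    moreover have "(\<Sum>k<N. a n k * \<bar>blinfun_apply g (x k)\<bar> powr p) \<le> power_row_sum a x p n g" for N
      unfolding power_row_sum_def using assms by (intro sum_le_suminf summable_power_row) (auto simp: nonneg)
    ultimately show "\<forall>N. (\<Sum>k<N. a n k * \<bar>blinfun_apply g (x k)\<bar> powr p) \<le> t"
      by (meson order_trans)
  qed (use assms in \<open>auto simp: power_row_sum_def intro!: suminf_le_const summable_power_row\<close>)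
  then have "{g. power_row_sum a x p n g \<le> t}
      = (\<Inter>N. {g \<in> topspace weak_star_topology. (\<Sum>k<N. a n k * \<bar>blinfun_apply g (x k)\<bar> powr p) \<in> {..t}})"
    by auto
  also have "closedin weak_star_topology \<dots>"
  proof (rule closedin_INT)
    fix N
    have "continuous_map weak_star_topology euclideanreal
        (\<lambda>g. \<Sum>k<N. a n k * \<bar>blinfun_apply g (x k)\<bar> powr p)"
      using assms by (intro continuous_map_sum continuous_map_real_mult_left
          continuous_map_weak_star_abs_powr_apply) auto
    then show "closedin weak_star_topology
        {g \<in> topspace weak_star_topology. (\<Sum>k<N. a n k * \<bar>blinfun_apply g (x k)\<bar> powr p) \<in> {..t}}"
      by (rule closedin_continuous_map_preimage) simp
  qed simp
  finally show ?thesis .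
qed

lemma power_row_sum_le_near:
  assumes "0 < p" and "0 < \<epsilon>"
  obtains \<delta> where "0 < \<delta>"
    and "\<And>g n. dist g f < \<delta> \<Longrightarrow>
           power_row_sum a x p n f \<le> power_row_sum a x p n g + \<epsilon> * (\<Sum>k. a n k)"
proof -
  obtain \<delta> where "0 < \<delta>" and close: "\<And>g k. dist g f < \<delta> \<Longrightarrow>
      \<bar>blinfun_apply f (x k)\<bar> powr p \<le> \<bar>blinfun_apply g (x k)\<bar> powr p + \<epsilon>"
    using abs_powr_apply_uniformly_close[OF bounded_x assms] by blast
  show ?thesis
  proof (rule that[OF \<open>0 < \<delta>\<close>])
    fix g n assume "dist g f < \<delta>"
    then have "power_row_sum a x p n f \<le> (\<Sum>k. a n k * \<bar>blinfun_apply g (x k)\<bar> powr p + \<epsilon> * a n k)"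
      unfolding power_row_sum_def using assms(1)
      by (intro suminf_le) (auto intro!: summable_add summable_mult summable_row summable_power_row
          simp: algebra_simps dest: mult_left_mono[OF close nonneg])
    also have "\<dots> = power_row_sum a x p n g + \<epsilon> * (\<Sum>k. a n k)"
      unfolding power_row_sum_def using assms(1)
      by (simp add: suminf_add[symmetric] suminf_mult summable_mult summable_row summable_power_row)
    finally show "power_row_sum a x p n f \<le> power_row_sum a x p n g + \<epsilon> * (\<Sum>k. a n k)" .
  qed
qed

lemma limsup_power_row_sum_le_SUP:
  assumes gen: "I_generates B K" and "f \<in> K" and p: "1 \<le> p"
    and "bdd_above (range (\<lambda>n. \<Sum>k. a n k))"
  shows "limsup (\<lambda>n. ereal (power_row_sum a x p n f))
       \<le> (SUP g\<in>B. limsup (\<lambda>n. ereal (power_row_sum a x p n g)))"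
proof (rule ereal_le_real)
  fix z assume z: "(SUP g\<in>B. limsup (\<lambda>n. ereal (power_row_sum a x p n g))) \<le> ereal z"
  show "limsup (\<lambda>n. ereal (power_row_sum a x p n f)) \<le> ereal z"
  proof (rule ereal_le_epsilon2)
    fix e :: real assume e: "0 < e"
    obtain L0 where "\<And>n. (\<Sum>k. a n k) \<le> L0"
      using assms(4) unfolding bdd_above_def by auto
    then obtain L where L: "0 < L" "\<And>n. (\<Sum>k. a n k) \<le> L"
      by (metis max.strict_coboundedI1 max.coboundedI2 zero_less_one)
    define C where "C m = {g. \<forall>n\<ge>m. power_row_sum a x p n g \<le> z + e / 2}" for m
    have "B \<subseteq> (\<Union>m. C m)"
    proof
      fix g assume "g \<in> B"
      then have "limsup (\<lambda>n. ereal (power_row_sum a x p n g)) \<le> ereal z"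
        using order_trans[OF SUP_upper z] by blast
      also have "\<dots> < ereal (z + e / 2)" using e by simp
      finally have "limsup (\<lambda>n. ereal (power_row_sum a x p n g)) < ereal (z + e / 2)" .
      then obtain m where "\<forall>n\<ge>m. power_row_sum a x p n g < z + e / 2"
        by (auto dest!: Limsup_lessD simp: eventually_sequentially)
      then have "g \<in> C m" by (auto simp: C_def less_imp_le)
      then show "g \<in> (\<Union>m. C m)" by blast
    qed
    moreover have "incseq C" by (auto simp: incseq_def C_def)
    moreover have C_eq: "C m = (\<Inter>n\<in>{m..}. {g \<in> UNIV. power_row_sum a x p n g \<le> z + e / 2})" for m
      by (auto simp: C_def)
    have "closedin weak_star_topology (C m)" for m
      unfolding C_eq using p by (auto intro!: closedin_INT closedin_power_row_sum_le)
    moreover have "convex (C m)" for m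
      unfolding C_eq by (intro convex_INT convex_sublevel_set convex_on_power_row_sum p)
    ultimately have "f \<in> closure (\<Union>m. C m)"
      using I_generates_subset_closure_Union[OF gen] \<open>f \<in> K\<close> by blast
    obtain \<delta> where "0 < \<delta>" and near: "\<And>g n. dist g f < \<delta> \<Longrightarrow>
        power_row_sum a x p n f \<le> power_row_sum a x p n g + e / (2 * L) * (\<Sum>k. a n k)"
      using power_row_sum_le_near[of p "e / (2 * L)" f] p e L(1) by auto
    then obtain g m where "g \<in> C m" "dist g f < \<delta>"
      using \<open>f \<in> closure (\<Union>m. C m)\<close> closure_approachable by blast
    have "power_row_sum a x p n f \<le> z + e" if "m \<le> n" for n
    proof -
      have "e / (2 * L) * (\<Sum>k. a n k) \<le> e / 2"
        using mult_left_mono[OF L(2), of "e / (2 * L)" n] e L(1) by simp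
      moreover have "power_row_sum a x p n g \<le> z + e / 2"
        using \<open>g \<in> C m\<close> that by (simp add: C_def)
      ultimately show ?thesis using near[OF \<open>dist g f < \<delta>\<close>, of n] by linarith
    qed
    then show "limsup (\<lambda>n. ereal (power_row_sum a x p n f)) \<le> ereal z + ereal e"
      by (intro Limsup_bounded) (auto simp: eventually_sequentially)
  qed
qed

end

theorem corollary3p3:
  fixes K B :: "('a::banach \<Rightarrow>\<^sub>L real) set"
    and a :: "nat \<Rightarrow> nat \<Rightarrow> real"
    and p :: real
    and x :: "nat \<Rightarrow> 'a"
  assumes "compactin weak_star_topology K"
    and "convex K"
    and "B \<subseteq> K"
    and "I_generates B K"
    and "positive_matrix a"
    and "regular_matrix a"
    and "p \<ge> 1"
    and "bounded (range x)"
  shows "(SUP f\<in>K. limsup (\<lambda>n. ereal (\<Sum>k. a n k * \<bar>blinfun_apply f (x k)\<bar> powr p)))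
       = (SUP f\<in>B. limsup (\<lambda>n. ereal (\<Sum>k. a n k * \<bar>blinfun_apply f (x k)\<bar> powr p)))"
proof -
  have nonneg: "\<And>n k. 0 \<le> a n k"
    using assms(5) by (simp add: positive_matrix_def)
  moreover have "\<And>n. summable (a n)" and "bdd_above (range (\<lambda>n. \<Sum>k. a n k))"
    using assms(6) nonneg by (simp_all add: regular_matrix_def)
  ultimately have "(SUP f\<in>K. limsup (\<lambda>n. ereal (power_row_sum a x p n f)))
      \<le> (SUP f\<in>B. limsup (\<lambda>n. ereal (power_row_sum a x p n f)))"
    using assms(4,7,8) by (intro SUP_least limsup_power_row_sum_le_SUP)
  moreover have "(SUP f\<in>B. limsup (\<lambda>n. ereal (power_row_sum a x p n f)))
      \<le> (SUP f\<in>K. limsup (\<lambda>n. ereal (power_row_sum a x p n f)))"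
    using assms(3) by (rule SUP_subset_mono) simp
  ultimately show ?thesis
    unfolding power_row_sum_def by (rule antisym)
qed

end
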